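(* Let $\mathcal H$ be a real Hilbert space and $\hat H\colon\operatorname{dom}(\hat H)\subset\mathcal H\to\mathcal H$ a densely defined self-adjoint linear operator. Assume that $E_0:=\inf\sigma(\hat H)>-\infty$ is an eigenvalue of $\hat H$ and that $E_1:=\inf(\sigma(\hat H)\setminus\{E_0\})>E_0$. Let $V$ be the eigenspace of $E_0$ and $P_0$ the orthogonal projection onto $V$. Let $\psi_0\in\mathbb S$ with $\psi_0\notin V^\perp$, and let $\psi\colon[0,\infty)\to\mathbb S\cap\operatorname{dom}(\hat H)$ be a solution of the gradient flow \[ \psi'(t)=-2\big[\hat H\psi(t)-E(\psi(t))\psi(t)\big],\qquad \psi(0)=\psi_0, \] where the time derivative is understood classically with values in $\mathcal H$. Set $v_0:=P_0\psi_0/\|P_0\psi_0\|$ and $\alpha:=\|\psi_0-P_0\psi_0\|/\|P_0\psi_0\|$. Then for all $t\ge0$, \[ \|v_0-\psi(t)\|\le\sqrt2\,\alpha\,e^{-2(E_1-E_0)t}. \]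
   Context: $\mathbb S=\{\psi\in\mathcal H:\langle\psi,\psi\rangle=1\}$ is the unit sphere, and for $\psi\in\operatorname{dom}(\hat H)\setminus\{0\}$ the energy (Rayleigh quotient) is $E(\psi)=\langle\psi,\hat H\psi\rangle/\langle\psi,\psi\rangle$. $\sigma(\hat H)$ denotes the spectrum of $\hat H$. *)

theory Defs
  imports "HOL-Analysis.Analysis"
begin

text \<open>A (possibly unbounded) linear operator is given by a domain D and a map H,
  only the values on D being relevant.\<close>

definition lin_op_on :: "'a::real_vector set \<Rightarrow> ('a \<Rightarrow> 'a) \<Rightarrow> bool" where
  "lin_op_on D H \<longleftrightarrow> subspace D \<and>
     (\<forall>x\<in>D. \<forall>y\<in>D. H (x + y) = H x + H y) \<and>
     (\<forall>c. \<forall>x\<in>D. H (c *\<^sub>R x) = c *\<^sub>R H x)"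

definition adjoint_dom :: "'a::real_inner set \<Rightarrow> ('a \<Rightarrow> 'a) \<Rightarrow> 'a set" where
  "adjoint_dom D H = {y. \<exists>z. \<forall>x\<in>D. inner (H x) y = inner x z}"

text \<open>Densely defined self-adjoint operator: H = H^*, i.e. dom H^* = D and
  H^* y = H y for y in D (adjoint value is unique by density).\<close>
definition densely_defined_self_adjoint :: "'a::real_inner set \<Rightarrow> ('a \<Rightarrow> 'a) \<Rightarrow> bool" where
  "densely_defined_self_adjoint D H \<longleftrightarrow> lin_op_on D H \<and> closure D = UNIV \<and>
     adjoint_dom D H = D \<and> (\<forall>x\<in>D. \<forall>y\<in>D. inner (H x) y = inner x (H y))"

text \<open>Spectrum: lambda is in the resolvent set iff H - lambda : D -> whole space is
  bijective with bounded inverse.\<close>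
definition op_spectrum :: "'a::real_normed_vector set \<Rightarrow> ('a \<Rightarrow> 'a) \<Rightarrow> real set" where
  "op_spectrum D H = {l. \<not> ((\<forall>y. \<exists>x\<in>D. H x - l *\<^sub>R x = y) \<and>
       (\<exists>C. \<forall>x\<in>D. norm x \<le> C * norm (H x - l *\<^sub>R x)))}"

definition eigenspace_op :: "'a::real_vector set \<Rightarrow> ('a \<Rightarrow> 'a) \<Rightarrow> real \<Rightarrow> 'a set" where
  "eigenspace_op D H l = {x\<in>D. H x = l *\<^sub>R x}"

definition orth_proj :: "'a::real_inner set \<Rightarrow> 'a \<Rightarrow> 'a" where
  "orth_proj V x = (THE p. p \<in> V \<and> (\<forall>v\<in>V. inner (x - p) v = 0))"

definition energy :: "('a::real_inner \<Rightarrow> 'a) \<Rightarrow> 'a \<Rightarrow> real" where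
  "energy H \<psi> = inner \<psi> (H \<psi>) / inner \<psi> \<psi>"

end

theory Submission
  imports Defs
begin

text \<open>The proof avoids the spectral theorem: everything is reduced to the bounded
  symmetric operator \<open>S = 1 - (H - E0 + 1)\<inverse>\<close>.  The spectral hypotheses say that \<open>S - r\<close>
  is bounded below for \<open>r < 0\<close>, \<open>0 < r < \<epsilon>\<close> and \<open>r > 1\<close>, where \<open>\<epsilon> = (E1 - E0)/(1 + E1 - E0)\<close>.
  Since the bottom of the numerical range of a bounded symmetric operator is an approximate
  eigenvalue, this yields \<open>0 \<le> S \<le> 1\<close> and \<open>S\<^sup>2 \<ge> \<epsilon> S\<close>.  Then the iterates of \<open>1 - S\<close>
  converge geometrically, which splits every vector orthogonally along the ground eigenspace
  \<open>V = ker S\<close>, and on \<open>V\<^sup>\<bottom>\<close> one gets \<open>S \<ge> \<epsilon>\<close>, i.e. \<open>\<langle>z, H z\<rangle> \<ge> E1 \<parallel>z\<parallel>\<^sup>2\<close>.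

  Along the flow every component \<open>q = \<langle>\<psi>, v\<rangle>\<close> with \<open>v \<in> V\<close> solves
  \<open>q' = 2 (E(\<psi>) - E0) q\<close>.  Hence \<open>\<psi>(t) = p(t) v0 + w(t)\<close> with \<open>w(t) \<perp> V\<close> and \<open>p > 0\<close>,
  and the gap inequality gives \<open>E(\<psi>) - E0 \<ge> (E1 - E0)(1 - p\<^sup>2)\<close>.  Therefore
  \<open>(1/p\<^sup>2 - 1) exp (4 (E1 - E0) t)\<close> is non-increasing, starting from \<open>\<alpha>\<^sup>2\<close>, and
  \<open>\<parallel>v0 - \<psi>(t)\<parallel>\<^sup>2 = 2 - 2 p \<le> 2 (1 - p\<^sup>2)\<close>.\<close>

section \<open>Form bounds of bounded symmetric operators\<close>

definition bounded_below_on :: "'a::real_normed_vector set \<Rightarrow> ('a \<Rightarrow> 'a) \<Rightarrow> bool" where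
  "bounded_below_on W X \<longleftrightarrow> (\<exists>C. \<forall>y\<in>W. norm y \<le> C * norm (X y))"

lemma bounded_below_on_nonneg:
  "bounded_below_on W X \<longleftrightarrow> (\<exists>C\<ge>0. \<forall>y\<in>W. norm y \<le> C * norm (X y))"
proof
  assume "bounded_below_on W X"
  then obtain C where "\<forall>y\<in>W. norm y \<le> C * norm (X y)"
    by (auto simp: bounded_below_on_def)
  then have "\<forall>y\<in>W. norm y \<le> max C 0 * norm (X y)"
    by (meson max.cobounded1 mult_right_mono norm_ge_zero order_trans)
  then show "\<exists>C\<ge>0. \<forall>y\<in>W. norm y \<le> C * norm (X y)"
    by (metis max.cobounded2)
qed (auto simp: bounded_below_on_def)

lemma bounded_below_on_subset:
  "bounded_below_on W X \<Longrightarrow> U \<subseteq> W \<Longrightarrow> bounded_below_on U X"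
  by (auto simp: bounded_below_on_def)

lemma bounded_below_on_comp:
  assumes "bounded_below_on UNIV X" "bounded_below_on W Y"
  shows "bounded_below_on W (\<lambda>y. X (Y y))"
proof -
  obtain C1 where C1: "C1 \<ge> 0" "\<And>y. norm y \<le> C1 * norm (X y)"
    using assms(1) by (auto simp: bounded_below_on_nonneg)
  obtain C2 where C2: "C2 \<ge> 0" "\<And>y. y \<in> W \<Longrightarrow> norm y \<le> C2 * norm (Y y)"
    using assms(2) by (auto simp: bounded_below_on_nonneg)
  have "norm y \<le> (C2 * C1) * norm (X (Y y))" if "y \<in> W" for y
  proof -
    have "norm y \<le> C2 * norm (Y y)" using C2 that by blast
    also have "\<dots> \<le> C2 * (C1 * norm (X (Y y)))" using C1 C2 by (intro mult_left_mono) auto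
    finally show ?thesis by (simp add: mult.assoc)
  qed
  then show ?thesis by (auto simp: bounded_below_on_def)
qed

lemma abs_inner_image_le:
  fixes X :: "'a::real_inner \<Rightarrow> 'a"
  assumes "norm (X y) \<le> norm y * K"
  shows "\<bar>inner (X y) y\<bar> \<le> K * inner y y"
proof -
  have "\<bar>inner (X y) y\<bar> \<le> norm (X y) * norm y" by (rule Cauchy_Schwarz_ineq2)
  also have "\<dots> \<le> norm y * K * norm y" using assms by (intro mult_right_mono) auto
  finally show ?thesis by (simp add: power2_norm_eq_inner[symmetric] power2_eq_square algebra_simps)
qed

text \<open>Cauchy--Schwarz for the semi-definite form \<open>\<langle>P x, y\<rangle>\<close>:
  expand \<open>0 \<le> \<langle>P (y - P y / K), y - P y / K\<rangle>\<close>.\<close>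
lemma inner_image_le_of_form_bounds:
  fixes P :: "'a::real_inner \<Rightarrow> 'a"
  assumes "linear P" and symmetric: "\<And>x y. inner (P x) y = inner x (P y)"
    and "subspace W" and invariant: "\<And>y. y \<in> W \<Longrightarrow> P y \<in> W"
    and nonneg: "\<And>y. y \<in> W \<Longrightarrow> 0 \<le> inner (P y) y"
    and upper: "\<And>y. y \<in> W \<Longrightarrow> inner (P y) y \<le> K * inner y y"
    and "K > 0" and "y \<in> W"
  shows "inner (P y) (P y) \<le> K * inner (P y) y"
proof -
  interpret linear P by fact
  define z where "z = P y"
  define t where "t = 1 / K"
  have zW: "z \<in> W" using invariant \<open>y \<in> W\<close> by (simp add: z_def)
  have "y - t *\<^sub>R z \<in> W"
    using \<open>subspace W\<close> \<open>y \<in> W\<close> zW by (simp add: subspace_diff subspace_scale)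
  then have "0 \<le> inner (P (y - t *\<^sub>R z)) (y - t *\<^sub>R z)" by (rule nonneg)
  also have "\<dots> = inner z y - 2 * t * inner z z + t * t * inner (P z) z"
    using symmetric[of z y]
    by (simp add: z_def diff scale inner_diff_left inner_diff_right inner_commute algebra_simps)
  also have "t * t * inner (P z) z \<le> t * t * (K * inner z z)"
    using upper[OF zW] by (intro mult_left_mono) auto
  also have "t * t * (K * inner z z) = t * inner z z"
    using \<open>K > 0\<close> by (simp add: t_def)
  finally have "t * inner z z \<le> inner z y" by simp
  then show ?thesis
    using \<open>K > 0\<close> by (simp add: t_def z_def field_simps inner_commute)
qed

text \<open>For \<open>P = X - m \<ge> 0\<close>, the previous lemma and \<open>\<parallel>y\<parallel> \<le> C \<parallel>P y\<parallel>\<close> give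
  \<open>\<parallel>y\<parallel>\<^sup>2 \<le> C\<^sup>2 K \<langle>P y, y\<rangle>\<close>.\<close>
lemma form_lower_bound_improve:
  fixes X :: "'a::real_inner \<Rightarrow> 'a"
  assumes "bounded_linear X" and symmetric: "\<And>x y. inner (X x) y = inner x (X y)"
    and "subspace W" and invariant: "\<And>y. y \<in> W \<Longrightarrow> X y \<in> W"
    and lower: "\<And>y. y \<in> W \<Longrightarrow> m * inner y y \<le> inner (X y) y"
    and "bounded_below_on W (\<lambda>y. X y - m *\<^sub>R y)"
  shows "\<exists>\<delta>>0. \<forall>y\<in>W. (m + \<delta>) * inner y y \<le> inner (X y) y"
proof -
  define P where "P y = X y - m *\<^sub>R y" for y
  have "bounded_linear P"
    unfolding P_def by (intro bounded_linear_sub \<open>bounded_linear X\<close> bounded_linear_scaleR_right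
        bounded_linear_ident)
  then obtain K where K: "K > 0" "\<And>y. norm (P y) \<le> norm y * K"
    using bounded_linear.pos_bounded by blast
  obtain C where C: "C \<ge> 0" "\<And>y. y \<in> W \<Longrightarrow> norm y \<le> C * norm (P y)"
    using \<open>bounded_below_on W _\<close> by (auto simp: bounded_below_on_nonneg P_def)
  have P_nonneg: "0 \<le> inner (P y) y" if "y \<in> W" for y
    using lower[OF that] by (simp add: P_def inner_diff_left)
  have P_upper: "inner (P y) y \<le> K * inner y y" for y
    using abs_inner_image_le[of P y K] K(2) by simp
  have P_square: "inner (P y) (P y) \<le> K * inner (P y) y" if "y \<in> W" for y
  proof (rule inner_image_le_of_form_bounds[OF _ _ \<open>subspace W\<close> _ P_nonneg P_upper K(1) that])
    show "linear P" using \<open>bounded_linear P\<close> by (rule bounded_linear.linear)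
    show "inner (P x) z = inner x (P z)" for x z
      by (simp add: P_def inner_diff_left inner_diff_right symmetric)
    show "P y \<in> W" if "y \<in> W" for y
      using invariant[OF that] that \<open>subspace W\<close> by (simp add: P_def subspace_diff subspace_scale)
  qed
  define \<delta> where "\<delta> = 1 / (C * C * K + 1)"
  have CCK: "0 \<le> C * C * K" using C(1) K(1) by simp
  have "(m + \<delta>) * inner y y \<le> inner (X y) y" if "y \<in> W" for y
  proof -
    have "inner y y = norm y ^ 2" by (simp add: power2_norm_eq_inner)
    also have "\<dots> \<le> (C * norm (P y)) ^ 2" using C(2)[OF that] by (intro power_mono) auto
    also have "\<dots> = C * C * inner (P y) (P y)"
      by (simp only: power_mult_distrib power2_norm_eq_inner) (simp add: power2_eq_square)
    also have "\<dots> \<le> C * C * (K * inner (P y) y)"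
      using P_square[OF that] by (intro mult_left_mono) auto
    also have "\<dots> \<le> (C * C * K + 1) * inner (P y) y"
      using P_nonneg[OF that] by (simp add: algebra_simps)
    finally have "\<delta> * inner y y \<le> inner (P y) y"
      using CCK by (simp add: \<delta>_def field_simps)
    then show ?thesis by (simp add: P_def inner_diff_left algebra_simps)
  qed
  moreover have "\<delta> > 0" using CCK by (simp add: \<delta>_def)
  ultimately show ?thesis by blast
qed

text \<open>The bottom of the numerical range of a bounded symmetric operator is an approximate
  eigenvalue.  Contrapositively: the supremum of the admissible lower bounds below \<open>b\<close> is
  admissible, and if it were \<open>< b\<close> the previous lemma would push it further up.\<close>
lemma form_lower_bound_extend:
  fixes X :: "'a::real_inner \<Rightarrow> 'a"
  assumes "bounded_linear X" and symmetric: "\<And>x y. inner (X x) y = inner x (X y)"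
    and "subspace W" and invariant: "\<And>y. y \<in> W \<Longrightarrow> X y \<in> W"
    and lower: "\<And>y. y \<in> W \<Longrightarrow> a * inner y y \<le> inner (X y) y"
    and bounded_below: "\<And>c. a \<le> c \<Longrightarrow> c < b \<Longrightarrow> bounded_below_on W (\<lambda>y. X y - c *\<^sub>R y)"
    and "y \<in> W"
  shows "b * inner y y \<le> inner (X y) y"
proof (cases "a < b")
  case False
  then have "b * inner y y \<le> a * inner y y" by (intro mult_right_mono) auto
  with lower[OF \<open>y \<in> W\<close>] show ?thesis by linarith
next
  case True
  define M where "M = {c. a \<le> c \<and> c \<le> b \<and> (\<forall>y\<in>W. c * inner y y \<le> inner (X y) y)}"
  define m where "m = Sup M"
  have "a \<in> M" using True lower by (auto simp: M_def)
  have "bdd_above M" by (auto simp: M_def bdd_above_def)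
  have am: "a \<le> m" unfolding m_def using \<open>a \<in> M\<close> \<open>bdd_above M\<close> by (rule cSup_upper)
  have mb: "m \<le> b" unfolding m_def using \<open>a \<in> M\<close> by (intro cSup_least) (auto simp: M_def)
  have m_lower: "m * inner y y \<le> inner (X y) y" if "y \<in> W" for y
  proof (cases "y = 0")
    case False
    then have yy: "inner y y > 0" by simp
    have "m \<le> inner (X y) y / inner y y" unfolding m_def
    proof (rule cSup_least)
      show "M \<noteq> {}" using \<open>a \<in> M\<close> by blast
      show "c \<le> inner (X y) y / inner y y" if "c \<in> M" for c
        using that \<open>y \<in> W\<close> yy by (auto simp: M_def field_simps)
    qed
    then show ?thesis using yy by (simp add: field_simps)
  qed simp
  have "m = b"
  proof (rule ccontr)
    assume "m \<noteq> b"
    with mb have "m < b" by simp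
    obtain \<delta> where \<delta>: "\<delta> > 0" "\<forall>y\<in>W. (m + \<delta>) * inner y y \<le> inner (X y) y"
      using form_lower_bound_improve[OF \<open>bounded_linear X\<close> symmetric \<open>subspace W\<close> invariant
          m_lower bounded_below[OF am \<open>m < b\<close>]] by blast
    have "min (m + \<delta>) b \<in> M"
    proof -
      have "min (m + \<delta>) b * inner y y \<le> inner (X y) y" if "y \<in> W" for y
        using \<delta>(2) that mult_right_mono[of "min (m + \<delta>) b" "m + \<delta>" "inner y y"] by force
      then show ?thesis using am \<delta>(1) \<open>m < b\<close> by (auto simp: M_def)
    qed
    then have "min (m + \<delta>) b \<le> m" unfolding m_def using \<open>bdd_above M\<close> by (rule cSup_upper)
    then show False using \<delta>(1) \<open>m < b\<close> by simp
  qed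
  then show ?thesis using m_lower \<open>y \<in> W\<close> by simp
qed

lemma form_lower_bound_of_bounded_below:
  fixes X :: "'a::real_inner \<Rightarrow> 'a"
  assumes "bounded_linear X" and symmetric: "\<And>x y. inner (X x) y = inner x (X y)"
    and bounded_below: "\<And>c. c < b \<Longrightarrow> bounded_below_on UNIV (\<lambda>y. X y - c *\<^sub>R y)"
  shows "b * inner y y \<le> inner (X y) y"
proof -
  obtain K where K: "\<And>y. norm (X y) \<le> norm y * K"
    using bounded_linear.bounded[OF \<open>bounded_linear X\<close>] by blast
  have "(- K) * inner y y \<le> inner (X y) y" for y
    using abs_inner_image_le[of X y K] K by (simp add: abs_le_iff)
  then show ?thesis
    using form_lower_bound_extend[OF \<open>bounded_linear X\<close> symmetric subspace_UNIV, of "- K" b y]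
      bounded_below by auto
qed

section \<open>Positive contractions with a spectral gap at zero\<close>

lemma closed_orthogonal_comp: "closed (U\<^sup>\<bottom>)"
proof -
  have "U\<^sup>\<bottom> = (\<Inter>u\<in>U. {x. inner u x = 0})"
    by (auto simp: orthogonal_comp_def orthogonal_def)
  then show ?thesis by (auto intro!: closed_INT closed_hyperplane)
qed

lemma orth_proj_eqI:
  assumes "subspace U" "z \<in> U" "x - z \<in> U\<^sup>\<bottom>"
  shows "orth_proj U x = z"
  unfolding orth_proj_def
proof (rule the_equality)
  show "z \<in> U \<and> (\<forall>v\<in>U. inner (x - z) v = 0)"
    using assms by (auto simp: orthogonal_comp_def orthogonal_def inner_commute)
next
  fix p assume p: "p \<in> U \<and> (\<forall>v\<in>U. inner (x - p) v = 0)"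
  have zp: "z - p \<in> U" using assms p by (simp add: subspace_diff)
  have "inner (z - p) (z - p) = inner (x - p) (z - p) - inner (x - z) (z - p)"
    by (simp add: inner_diff_left)
  also have "inner (x - p) (z - p) = 0" using p zp by (metis inner_commute)
  also have "inner (x - z) (z - p) = 0"
    using zp assms(3) by (simp add: orthogonal_comp_def orthogonal_def inner_commute[of "x - z"])
  finally show "p = z" by simp
qed

lemma geometric_steps_tail:
  fixes xs :: "nat \<Rightarrow> 'a::real_normed_vector"
  assumes steps: "\<And>n. norm (xs (Suc n) - xs n) \<le> c * \<rho> ^ n"
    and "0 \<le> \<rho>" "\<rho> < 1" "n \<le> m"
  shows "norm (xs m - xs n) \<le> c * \<rho> ^ n / (1 - \<rho>)"
proof -
  have "0 \<le> c" using order_trans[OF norm_ge_zero steps[of 0]] by simp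
  from \<open>n \<le> m\<close> obtain k where m: "m = n + k" using le_Suc_ex by blast
  have "norm (xs (n + k) - xs n) \<le> (\<Sum>i<k. c * \<rho> ^ (n + i))"
  proof (induction k)
    case (Suc k)
    have "norm (xs (n + Suc k) - xs n)
        \<le> norm (xs (n + k) - xs n) + norm (xs (Suc (n + k)) - xs (n + k))"
      using norm_triangle_ineq[of "xs (n + k) - xs n" "xs (Suc (n + k)) - xs (n + k)"] by simp
    then show ?case using Suc steps[of "n + k"] by simp
  qed simp
  also have "\<dots> = c * \<rho> ^ n * (1 - \<rho> ^ k) / (1 - \<rho>)"
    using \<open>\<rho> < 1\<close> by (simp add: power_add sum_distrib_left[symmetric] sum_gp_strict)
  also have "\<dots> \<le> c * \<rho> ^ n / (1 - \<rho>)"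
    using \<open>0 \<le> c\<close> \<open>0 \<le> \<rho>\<close> \<open>\<rho> < 1\<close> by (intro divide_right_mono mult_left_le) auto
  finally show ?thesis by (simp add: m)
qed

lemma geometric_steps_convergent:
  fixes xs :: "nat \<Rightarrow> 'a::{real_normed_vector, complete_space}"
  assumes steps: "\<And>n. norm (xs (Suc n) - xs n) \<le> c * \<rho> ^ n" and "0 \<le> \<rho>" "\<rho> < 1"
  obtains z where "xs \<longlonglongrightarrow> z" and "norm (z - xs 0) \<le> c / (1 - \<rho>)"
proof -
  note tail = geometric_steps_tail[OF steps \<open>0 \<le> \<rho>\<close> \<open>\<rho> < 1\<close>]
  have "Cauchy xs"
  proof (rule CauchyI)
    fix e :: real assume "0 < e"
    have "(\<lambda>n. c * \<rho> ^ n / (1 - \<rho>)) \<longlonglongrightarrow> 0"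
      using \<open>0 \<le> \<rho>\<close> \<open>\<rho> < 1\<close> by (intro tendsto_divide_zero tendsto_mult_right_zero LIMSEQ_power_zero) auto
    from order_tendstoD(2)[OF this \<open>0 < e\<close>]
    obtain M where M: "\<And>n. M \<le> n \<Longrightarrow> c * \<rho> ^ n / (1 - \<rho>) < e"
      by (auto simp: eventually_sequentially)
    have "norm (xs m - xs n) < e" if "M \<le> m" "M \<le> n" for m n
    proof (cases "n \<le> m")
      case True
      then show ?thesis using tail M[OF \<open>M \<le> n\<close>] by (meson le_less_trans)
    next
      case False
      then show ?thesis using tail[of m n] M[OF \<open>M \<le> m\<close>] by (simp add: norm_minus_commute)
    qed
    then show "\<exists>M. \<forall>m\<ge>M. \<forall>n\<ge>M. norm (xs m - xs n) < e" by blast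
  qed
  then obtain z where "xs \<longlonglongrightarrow> z" using Cauchy_convergent convergent_def by blast
  moreover have "norm (z - xs 0) \<le> c / (1 - \<rho>)"
  proof (rule LIMSEQ_le_const2)
    show "(\<lambda>m. norm (xs m - xs 0)) \<longlonglongrightarrow> norm (z - xs 0)"
      by (intro tendsto_intros \<open>xs \<longlonglongrightarrow> z\<close>)
    show "\<exists>N. \<forall>m\<ge>N. norm (xs m - xs 0) \<le> c / (1 - \<rho>)" using tail[of 0] by auto
  qed
  ultimately show ?thesis by (rule that)
qed

text \<open>Factor as \<open>(S - r\<^sub>1)(S - r\<^sub>2)\<close> with \<open>r\<^sub>1 + r\<^sub>2 = \<epsilon>\<close> and \<open>r\<^sub>1 r\<^sub>2 = -c\<close>;
  both roots lie in \<open>(0, \<epsilon>)\<close>.\<close>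
lemma bounded_below_square_shift:
  fixes S :: "'a::real_normed_vector \<Rightarrow> 'a"
  assumes "bounded_linear S"
    and gap: "\<And>r. 0 < r \<Longrightarrow> r < \<epsilon> \<Longrightarrow> bounded_below_on UNIV (\<lambda>y. S y - r *\<^sub>R y)"
    and "0 < \<epsilon>" "- (\<epsilon>\<^sup>2 / 4) \<le> c" "c < 0"
  shows "bounded_below_on UNIV (\<lambda>y. S (S y) - \<epsilon> *\<^sub>R S y - c *\<^sub>R y)"
proof -
  interpret S: bounded_linear S by fact
  define d where "d = sqrt (\<epsilon>\<^sup>2 + 4 * c)"
  have d: "0 \<le> d" "d\<^sup>2 = \<epsilon>\<^sup>2 + 4 * c" using assms(4) by (simp_all add: d_def)
  have "d\<^sup>2 < \<epsilon>\<^sup>2" using d(2) \<open>c < 0\<close> by simp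
  from power2_less_imp_less[OF this] have "d < \<epsilon>" using \<open>0 < \<epsilon>\<close> by simp
  define r1 r2 where "r1 = (\<epsilon> - d) / 2" and "r2 = (\<epsilon> + d) / 2"
  have r: "0 < r1" "r1 < \<epsilon>" "0 < r2" "r2 < \<epsilon>"
    using d(1) \<open>d < \<epsilon>\<close> by (auto simp: r1_def r2_def)
  have "r1 + r2 = \<epsilon>" "r1 * r2 = - c"
    using d(2) by (auto simp: r1_def r2_def field_simps power2_eq_square)
  have factor: "S (S y) - \<epsilon> *\<^sub>R S y - c *\<^sub>R y = S (S y - r2 *\<^sub>R y) - r1 *\<^sub>R (S y - r2 *\<^sub>R y)" for y
  proof -
    have "S (S y - r2 *\<^sub>R y) - r1 *\<^sub>R (S y - r2 *\<^sub>R y)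
        = S (S y) - (r1 + r2) *\<^sub>R S y + (r1 * r2) *\<^sub>R y"
      by (simp add: S.diff S.scaleR scaleR_diff_right scaleR_add_left)
    then show ?thesis using \<open>r1 + r2 = \<epsilon>\<close> \<open>r1 * r2 = - c\<close> by simp
  qed
  show ?thesis
    unfolding factor using bounded_below_on_comp[OF gap gap] r by blast
qed

text \<open>The form of \<open>S\<^sup>2 - \<epsilon> S\<close> is bounded below by \<open>-\<epsilon>\<^sup>2/4\<close>, and the previous lemma
  lifts this bound to \<open>0\<close>.\<close>
lemma inner_image_ge_of_spectral_gap:
  fixes S :: "'a::real_inner \<Rightarrow> 'a"
  assumes "bounded_linear S" and symmetric: "\<And>x y. inner (S x) y = inner x (S y)"
    and "0 < \<epsilon>"
    and gap: "\<And>r. 0 < r \<Longrightarrow> r < \<epsilon> \<Longrightarrow> bounded_below_on UNIV (\<lambda>y. S y - r *\<^sub>R y)"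
  shows "\<epsilon> * inner (S y) y \<le> inner (S y) (S y)"
proof -
  define X where "X y = S (S y) - \<epsilon> *\<^sub>R S y" for y
  have "bounded_linear X"
    unfolding X_def by (intro bounded_linear_sub bounded_linear_compose[OF \<open>bounded_linear S\<close>]
        \<open>bounded_linear S\<close> bounded_linear_compose[OF bounded_linear_scaleR_right])
  have X_symmetric: "inner (X x) z = inner x (X z)" for x z
    by (simp add: X_def inner_diff_left inner_diff_right symmetric)
  have X_form: "inner (X y) y = inner (S y) (S y) - \<epsilon> * inner (S y) y" for y
    by (simp add: X_def inner_diff_left symmetric)
  have X_lower: "- (\<epsilon>\<^sup>2 / 4) * inner y y \<le> inner (X y) y" for y
  proof -
    have "\<epsilon> * inner (S y) y \<le> \<epsilon> * (norm (S y) * norm y)"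
      using \<open>0 < \<epsilon>\<close> norm_cauchy_schwarz by (intro mult_left_mono) auto
    moreover have "0 \<le> (norm (S y) - \<epsilon> * norm y / 2)\<^sup>2" by simp
    ultimately show ?thesis
      unfolding X_form by (simp add: power2_eq_square power2_norm_eq_inner[symmetric] algebra_simps)
  qed
  have "0 * inner y y \<le> inner (X y) y"
    using form_lower_bound_extend[OF \<open>bounded_linear X\<close> X_symmetric subspace_UNIV _ X_lower, of 0 y]
      bounded_below_square_shift[OF \<open>bounded_linear S\<close> gap \<open>0 < \<epsilon>\<close>]
    by (simp add: X_def)
  then show ?thesis by (simp add: X_form)
qed

locale gapped_positive_contraction =
  fixes S :: "'a::{real_inner, complete_space} \<Rightarrow> 'a" and \<epsilon> :: real
  assumes bounded_linear: "bounded_linear S"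
    and symmetric: "\<And>x y. inner (S x) y = inner x (S y)"
    and form_nonneg: "\<And>y. 0 \<le> inner (S y) y"
    and form_le: "\<And>y. inner (S y) y \<le> inner y y"
    and eps: "0 < \<epsilon>" "\<epsilon> \<le> 1"
    and gap: "\<And>r. 0 < r \<Longrightarrow> r < \<epsilon> \<Longrightarrow> bounded_below_on UNIV (\<lambda>y. S y - r *\<^sub>R y)"
begin

interpretation S: bounded_linear S by (rule bounded_linear)

lemma subspace_kernel: "subspace {v. S v = 0}"
  by (auto simp: subspace_def S.add S.scaleR)

lemma image_in_kernel_orthogonal: "S y \<in> {v. S v = 0}\<^sup>\<bottom>"
  by (auto simp: orthogonal_comp_def orthogonal_def symmetric[symmetric])

lemma inner_image_le: "inner (S y) (S y) \<le> inner (S y) y"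
  using inner_image_le_of_form_bounds[OF S.linear_axioms symmetric subspace_UNIV _ form_nonneg,
      of 1 y] form_le by simp

lemma inner_image_ge: "\<epsilon> * inner (S y) y \<le> inner (S y) (S y)"
  by (rule inner_image_ge_of_spectral_gap[OF bounded_linear symmetric eps(1) gap])

lemma form_contract: "inner (S (y - S y)) (y - S y) \<le> (1 - \<epsilon>) * inner (S y) y"
proof -
  have "inner (S (y - S y)) (y - S y)
      = inner (S y) y - 2 * inner (S y) (S y) + inner (S (S y)) (S y)"
    using symmetric[of "S y" y] by (simp add: S.diff inner_diff_left inner_diff_right)
  also have "\<dots> \<le> inner (S y) y - inner (S y) (S y)" using form_le[of "S y"] by simp
  also have "\<dots> \<le> (1 - \<epsilon>) * inner (S y) y" using inner_image_ge[of y] by (simp add: algebra_simps)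
  finally show ?thesis .
qed

lemma norm_image_iterate_le:
  "norm (S (((\<lambda>y. y - S y) ^^ n) x)) \<le> sqrt (inner (S x) x) * sqrt (1 - \<epsilon>) ^ n"
proof -
  let ?x = "\<lambda>n. ((\<lambda>y. y - S y) ^^ n) x"
  have form: "inner (S (?x n)) (?x n) \<le> (1 - \<epsilon>) ^ n * inner (S x) x" for n
  proof (induction n)
    case (Suc n)
    have "inner (S (?x (Suc n))) (?x (Suc n)) \<le> (1 - \<epsilon>) * inner (S (?x n)) (?x n)"
      using form_contract by simp
    also have "\<dots> \<le> (1 - \<epsilon>) * ((1 - \<epsilon>) ^ n * inner (S x) x)"
      using Suc eps by (intro mult_left_mono) auto
    finally show ?case by simp
  qed simp
  have "norm (S (?x n)) \<le> sqrt (inner (S (?x n)) (?x n))"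
    using inner_image_le by (simp add: norm_eq_sqrt_inner)
  also have "\<dots> \<le> sqrt ((1 - \<epsilon>) ^ n * inner (S x) x)" using form by simp
  also have "\<dots> = sqrt (inner (S x) x) * sqrt (1 - \<epsilon>) ^ n"
    by (simp add: real_sqrt_mult real_sqrt_power)
  finally show ?thesis .
qed

text \<open>By the previous lemma the iterates of \<open>1 - S\<close> converge geometrically.  The limit is
  a fixed point, i.e. lies in the kernel, and \<open>x\<close> minus the limit is a limit of sums of
  vectors in the range of \<open>S\<close>, which is orthogonal to the kernel.\<close>
lemma kernel_decomposition:
  obtains z where "S z = 0" and "x - z \<in> {v. S v = 0}\<^sup>\<bottom>"
    and "norm (x - z) \<le> sqrt (inner (S x) x) / (1 - sqrt (1 - \<epsilon>))"
proof -
  define \<rho> where "\<rho> = sqrt (1 - \<epsilon>)"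
  have \<rho>: "0 \<le> \<rho>" "\<rho> < 1" using eps by (auto simp: \<rho>_def)
  define c where "c = sqrt (inner (S x) x)"
  define xs where "xs n = ((\<lambda>y. y - S y) ^^ n) x" for n
  define g where "g n = S (xs n)" for n
  have xs_Suc: "xs (Suc n) = xs n - g n" for n by (simp add: xs_def g_def)
  have g_bound: "norm (g n) \<le> c * \<rho> ^ n" for n
    using norm_image_iterate_le by (simp add: g_def xs_def c_def \<rho>_def)
  obtain z where "xs \<longlonglongrightarrow> z" and bound: "norm (z - x) \<le> c / (1 - \<rho>)"
    using geometric_steps_convergent[of xs c \<rho>] g_bound \<rho> by (auto simp: xs_Suc xs_def[of 0])
  have "g \<longlonglongrightarrow> S z" unfolding g_def by (rule S.tendsto[OF \<open>xs \<longlonglongrightarrow> z\<close>])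
  moreover have "g \<longlonglongrightarrow> z - z"
    using tendsto_diff[OF \<open>xs \<longlonglongrightarrow> z\<close> LIMSEQ_Suc[OF \<open>xs \<longlonglongrightarrow> z\<close>]] by (simp add: xs_Suc)
  ultimately have "S z = 0" by (simp add: LIMSEQ_unique)
  have "x - xs n \<in> {v. S v = 0}\<^sup>\<bottom>" for n
  proof (induction n)
    case (Suc n)
    then show ?case
      using subspace_add[OF subspace_orthogonal_comp Suc image_in_kernel_orthogonal[of "xs n"]]
      by (simp add: xs_Suc g_def algebra_simps)
  qed (simp add: xs_def subspace_0[OF subspace_orthogonal_comp])
  then have "x - z \<in> {v. S v = 0}\<^sup>\<bottom>"
    using closed_sequentially[OF closed_orthogonal_comp _ tendsto_diff[OF tendsto_const \<open>xs \<longlonglongrightarrow> z\<close>]]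
    by blast
  with that \<open>S z = 0\<close> bound show ?thesis by (simp add: c_def \<rho>_def norm_minus_commute)
qed

lemma orth_proj_kernel:
  "orth_proj {v. S v = 0} x \<in> {v. S v = 0} \<and> x - orth_proj {v. S v = 0} x \<in> {v. S v = 0}\<^sup>\<bottom>"
proof -
  obtain z where "S z = 0" "x - z \<in> {v. S v = 0}\<^sup>\<bottom>" by (rule kernel_decomposition)
  moreover from this have "orth_proj {v. S v = 0} x = z"
    by (intro orth_proj_eqI subspace_kernel) auto
  ultimately show ?thesis by simp
qed

lemma form_lower_bound_on_kernel_orthogonal:
  assumes "y \<in> {v. S v = 0}\<^sup>\<bottom>"
  shows "\<epsilon> * inner y y \<le> inner (S y) y"
proof -
  define a where "a = (1 - sqrt (1 - \<epsilon>))\<^sup>2"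
  have "0 < a" using eps by (simp add: a_def)
  have coercive: "a * inner z z \<le> inner (S z) z" if "z \<in> {v. S v = 0}\<^sup>\<bottom>" for z
  proof -
    obtain k where k: "S k = 0" "z - k \<in> {v. S v = 0}\<^sup>\<bottom>"
      and bound: "norm (z - k) \<le> sqrt (inner (S z) z) / (1 - sqrt (1 - \<epsilon>))"
      by (rule kernel_decomposition)
    have "z - (z - k) \<in> {v. S v = 0}\<^sup>\<bottom>"
      by (rule subspace_diff[OF subspace_orthogonal_comp that k(2)])
    then have "k = 0" using k(1) by (auto simp: orthogonal_comp_def orthogonal_def)
    then have "norm z * (1 - sqrt (1 - \<epsilon>)) \<le> sqrt (inner (S z) z)"
      using bound eps by (simp add: pos_le_divide_eq)
    then have "(norm z * (1 - sqrt (1 - \<epsilon>)))\<^sup>2 \<le> (sqrt (inner (S z) z))\<^sup>2"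
      using eps by (intro power_mono) auto
    then have "(norm z * (1 - sqrt (1 - \<epsilon>)))\<^sup>2 \<le> inner (S z) z"
      using form_nonneg by simp
    then show ?thesis by (simp add: a_def power_mult_distrib power2_norm_eq_inner mult.commute)
  qed
  show ?thesis
  proof (rule form_lower_bound_extend[OF bounded_linear symmetric subspace_orthogonal_comp _ coercive _ assms])
    show "S y \<in> {v. S v = 0}\<^sup>\<bottom>" for y by (rule image_in_kernel_orthogonal)
    show "bounded_below_on ({v. S v = 0}\<^sup>\<bottom>) (\<lambda>y. S y - c *\<^sub>R y)" if "a \<le> c" "c < \<epsilon>" for c
      using gap[of c] \<open>0 < a\<close> that bounded_below_on_subset by force
  qed
qed

end

section \<open>Resolvents of symmetric operators\<close>

locale symmetric_operator =
  fixes D :: "'a::real_inner set" and H :: "'a \<Rightarrow> 'a"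
  assumes lin_op: "lin_op_on D H"
    and symmetric: "\<And>x y. x \<in> D \<Longrightarrow> y \<in> D \<Longrightarrow> inner (H x) y = inner x (H y)"
begin

lemma subspace_domain: "subspace D"
  and H_add: "x \<in> D \<Longrightarrow> y \<in> D \<Longrightarrow> H (x + y) = H x + H y"
  and H_scale: "x \<in> D \<Longrightarrow> H (c *\<^sub>R x) = c *\<^sub>R H x"
  using lin_op by (auto simp: lin_op_on_def)

lemma H_diff: "x \<in> D \<Longrightarrow> y \<in> D \<Longrightarrow> H (x - y) = H x - H y"
  using H_add[of x "(-1) *\<^sub>R y"] H_scale[of y "-1"] subspace_domain by (simp add: subspace_neg)

lemma subspace_eigenspace: "subspace (eigenspace_op D H l)"
proof -
  have "H 0 = 0" using H_scale[of 0 0] subspace_0[OF subspace_domain] by simp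
  then show ?thesis
    using subspace_domain H_add H_scale
    by (auto simp: subspace_def eigenspace_op_def scaleR_add_right scaleR_left_commute)
qed

definition resolvent :: "real \<Rightarrow> 'a \<Rightarrow> 'a" where
  "resolvent l y = (THE x. x \<in> D \<and> H x - l *\<^sub>R x = y)"

context
  fixes l :: real
  assumes regular: "l \<notin> op_spectrum D H"
begin

lemma shift_injective:
  assumes "x \<in> D" "x' \<in> D" "H x - l *\<^sub>R x = H x' - l *\<^sub>R x'"
  shows "x = x'"
proof -
  obtain C where C: "\<forall>x\<in>D. norm x \<le> C * norm (H x - l *\<^sub>R x)"
    using regular by (auto simp: op_spectrum_def)
  have "H (x - x') - l *\<^sub>R (x - x') = (H x - l *\<^sub>R x) - (H x' - l *\<^sub>R x')"
    using H_diff[OF assms(1,2)] by (simp add: algebra_simps)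
  also have "\<dots> = 0" using assms(3) by simp
  finally have "H (x - x') - l *\<^sub>R (x - x') = 0" .
  moreover have "x - x' \<in> D" using subspace_domain assms by (simp add: subspace_diff)
  ultimately have "norm (x - x') \<le> 0" using C by force
  then show ?thesis by simp
qed

lemma resolvent_in_domain: "resolvent l y \<in> D"
  and resolvent_eq: "H (resolvent l y) - l *\<^sub>R resolvent l y = y"
proof -
  obtain x where "x \<in> D" "H x - l *\<^sub>R x = y"
    using regular by (auto simp: op_spectrum_def)
  then have "\<exists>!x. x \<in> D \<and> H x - l *\<^sub>R x = y" using shift_injective by blast
  then have "resolvent l y \<in> D \<and> H (resolvent l y) - l *\<^sub>R resolvent l y = y"
    unfolding resolvent_def by (rule theI')
  then show "resolvent l y \<in> D" "H (resolvent l y) - l *\<^sub>R resolvent l y = y" by auto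
qed

lemma resolvent_unique: "x \<in> D \<Longrightarrow> H x - l *\<^sub>R x = y \<Longrightarrow> resolvent l y = x"
  using shift_injective resolvent_in_domain resolvent_eq by metis

lemma bounded_linear_resolvent: "bounded_linear (resolvent l)"
proof -
  obtain C where C: "\<forall>x\<in>D. norm x \<le> C * norm (H x - l *\<^sub>R x)"
    using regular by (auto simp: op_spectrum_def)
  show ?thesis
  proof (rule bounded_linear_intro[of _ C])
    show "resolvent l (x + y) = resolvent l x + resolvent l y" for x y
      using resolvent_eq[of x, unfolded diff_eq_eq] resolvent_eq[of y, unfolded diff_eq_eq]
      by (intro resolvent_unique)
        (simp_all add: subspace_add[OF subspace_domain] resolvent_in_domain H_add algebra_simps)
    show "resolvent l (c *\<^sub>R x) = c *\<^sub>R resolvent l x" for c x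
    proof (rule resolvent_unique)
      show "c *\<^sub>R resolvent l x \<in> D"
        by (simp add: subspace_scale[OF subspace_domain] resolvent_in_domain)
      have "H (c *\<^sub>R resolvent l x) - l *\<^sub>R c *\<^sub>R resolvent l x
          = c *\<^sub>R (H (resolvent l x) - l *\<^sub>R resolvent l x)"
        by (simp add: H_scale resolvent_in_domain scaleR_diff_right scaleR_left_commute)
      then show "H (c *\<^sub>R resolvent l x) - l *\<^sub>R c *\<^sub>R resolvent l x = c *\<^sub>R x"
        by (simp add: resolvent_eq)
    qed
    show "norm (resolvent l y) \<le> norm y * C" for y
      using C resolvent_in_domain resolvent_eq by (metis mult.commute)
  qed
qed

lemma resolvent_symmetric: "inner (resolvent l x) y = inner x (resolvent l y)"
proof -
  let ?R = "resolvent l"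
  have "inner (?R x) y = inner (?R x) (H (?R y) - l *\<^sub>R ?R y)" by (simp add: resolvent_eq)
  also have "\<dots> = inner (H (?R x) - l *\<^sub>R ?R x) (?R y)"
    using symmetric[OF resolvent_in_domain resolvent_in_domain]
    by (simp add: inner_diff_left inner_diff_right)
  also have "\<dots> = inner x (?R y)" by (simp add: resolvent_eq)
  finally show ?thesis .
qed

lemma resolvent_fixed_iff: "resolvent l y = y \<longleftrightarrow> y \<in> eigenspace_op D H (l + 1)"
proof
  assume "resolvent l y = y"
  then show "y \<in> eigenspace_op D H (l + 1)"
    using resolvent_in_domain[of y] resolvent_eq[of y]
    by (auto simp: eigenspace_op_def algebra_simps)
next
  assume "y \<in> eigenspace_op D H (l + 1)"
  then show "resolvent l y = y"
    by (intro resolvent_unique) (auto simp: eigenspace_op_def algebra_simps)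
qed

text \<open>\<open>(H - (l + 1/\<nu>)) R y = -(R y - \<nu> y)/\<nu>\<close> for \<open>R = (H - l)\<inverse>\<close>: the lower bound of
  \<open>H - (l + 1/\<nu>)\<close> controls \<open>R y\<close>, and then \<open>y = (R y - (R y - \<nu> y))/\<nu>\<close>.\<close>
lemma bounded_below_resolvent_shift:
  assumes "\<nu> \<noteq> 0" and "l + 1 / \<nu> \<notin> op_spectrum D H"
  shows "bounded_below_on UNIV (\<lambda>y. resolvent l y - \<nu> *\<^sub>R y)"
proof -
  let ?R = "resolvent l"
  obtain C where C: "C \<ge> 0" "\<And>x. x \<in> D \<Longrightarrow> norm x \<le> C * norm (H x - (l + 1 / \<nu>) *\<^sub>R x)"
    using assms(2) bounded_below_on_nonneg[of D "\<lambda>x. H x - (l + 1 / \<nu>) *\<^sub>R x"]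
    by (auto simp: op_spectrum_def bounded_below_on_def)
  define K where "K = (C / \<bar>\<nu>\<bar> + 1) / \<bar>\<nu>\<bar>"
  have "norm y \<le> K * norm (?R y - \<nu> *\<^sub>R y)" for y
  proof -
    have shift: "H (?R y) - (l + 1 / \<nu>) *\<^sub>R ?R y = - (1 / \<nu>) *\<^sub>R (?R y - \<nu> *\<^sub>R y)"
      using resolvent_eq[of y] \<open>\<nu> \<noteq> 0\<close> by (simp add: algebra_simps)
    have "norm (?R y) \<le> C * norm (H (?R y) - (l + 1 / \<nu>) *\<^sub>R ?R y)"
      by (rule C(2)[OF resolvent_in_domain])
    also have "\<dots> = C / \<bar>\<nu>\<bar> * norm (?R y - \<nu> *\<^sub>R y)"
      unfolding shift by simp
    finally have R_bound: "norm (?R y) \<le> C / \<bar>\<nu>\<bar> * norm (?R y - \<nu> *\<^sub>R y)" .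
    have "y = (1 / \<nu>) *\<^sub>R (?R y - (?R y - \<nu> *\<^sub>R y))" using \<open>\<nu> \<noteq> 0\<close> by simp
    then have "norm y = norm (?R y - (?R y - \<nu> *\<^sub>R y)) / \<bar>\<nu>\<bar>"
      by (metis norm_scaleR abs_divide abs_one divide_inverse_commute inverse_eq_divide mult.commute)
    also have "\<dots> \<le> (norm (?R y) + norm (?R y - \<nu> *\<^sub>R y)) / \<bar>\<nu>\<bar>"
      by (intro divide_right_mono norm_triangle_ineq4) auto
    also have "\<dots> \<le> K * norm (?R y - \<nu> *\<^sub>R y)"
      using R_bound by (simp add: K_def field_simps divide_right_mono)
    finally show ?thesis .
  qed
  then show ?thesis unfolding bounded_below_on_def by blast
qed

end

end

section \<open>Spectral gap above the ground state energy\<close>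

locale spectral_gap = symmetric_operator D H
  for D :: "'a::{real_inner, complete_space} set" and H +
  fixes E0 E1 :: real
  assumes gap: "E0 < E1"
    and regular_below: "\<And>l. l < E0 \<Longrightarrow> l \<notin> op_spectrum D H"
    and regular_in_gap: "\<And>l. E0 < l \<Longrightarrow> l < E1 \<Longrightarrow> l \<notin> op_spectrum D H"
begin

abbreviation "V \<equiv> eigenspace_op D H E0"

text \<open>The resolvent \<open>T\<close> at \<open>E0 - 1\<close> maps the spectrum of \<open>H\<close>, contained in
  \<open>{E0} \<union> [E1, \<infinity>)\<close>, into \<open>{1} \<union> (0, 1 - \<epsilon>]\<close>; so \<open>S = 1 - T\<close> is a positive
  contraction without spectrum in \<open>(0, \<epsilon>)\<close>, whose kernel is the ground eigenspace.\<close>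
abbreviation "T \<equiv> resolvent (E0 - 1)"

definition S :: "'a \<Rightarrow> 'a" where "S y = y - T y"

definition \<epsilon> :: real where "\<epsilon> = (E1 - E0) / (1 + (E1 - E0))"

lemma regular_shift: "E0 - 1 \<notin> op_spectrum D H"
  by (rule regular_below) simp

lemmas T_bounded_linear = bounded_linear_resolvent[OF regular_shift]
  and T_symmetric = resolvent_symmetric[OF regular_shift]
  and T_bounded_below = bounded_below_resolvent_shift[OF regular_shift]

lemma eps_pos: "0 < \<epsilon>" and eps_less_1: "\<epsilon> < 1"
  and one_minus_eps: "1 - \<epsilon> = 1 / (1 + (E1 - E0))"
  using gap by (auto simp: \<epsilon>_def field_simps)

lemma T_form_nonneg: "0 \<le> inner (T y) y"
proof -
  have "0 * inner y y \<le> inner (T y) y"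
  proof (rule form_lower_bound_of_bounded_below[OF T_bounded_linear T_symmetric])
    fix c :: real assume "c < 0"
    then have "E0 - 1 + 1 / c < E0" by (simp add: divide_neg_pos)
    then show "bounded_below_on UNIV (\<lambda>y. T y - c *\<^sub>R y)"
      using T_bounded_below \<open>c < 0\<close> regular_below by simp
  qed
  then show ?thesis by simp
qed

lemma T_form_le: "inner (T y) y \<le> inner y y"
proof -
  have "(- 1) * inner y y \<le> inner (- T y) y"
  proof (rule form_lower_bound_of_bounded_below)
    show "bounded_linear (\<lambda>y. - T y)" by (rule bounded_linear_minus[OF T_bounded_linear])
    show "inner (- T x) z = inner x (- T z)" for x z by (simp add: T_symmetric)
    fix c :: real assume "c < - 1"
    define \<nu> where "\<nu> = - c"
    have "1 < \<nu>" using \<open>c < - 1\<close> by (simp add: \<nu>_def)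
    then have "E0 - 1 + 1 / \<nu> < E0" by simp
    then have "bounded_below_on UNIV (\<lambda>y. T y - \<nu> *\<^sub>R y)"
      using T_bounded_below[of \<nu>] regular_below \<open>1 < \<nu>\<close> by simp
    moreover have "norm (- T y - c *\<^sub>R y) = norm (T y - \<nu> *\<^sub>R y)" for y
      using norm_minus_cancel[of "T y - \<nu> *\<^sub>R y"] by (simp add: \<nu>_def)
    ultimately show "bounded_below_on UNIV (\<lambda>y. - T y - c *\<^sub>R y)"
      by (simp add: bounded_below_on_def)
  qed
  then show ?thesis by simp
qed

lemma S_bounded_below:
  assumes "0 < r" "r < \<epsilon>"
  shows "bounded_below_on UNIV (\<lambda>y. S y - r *\<^sub>R y)"
proof -
  have "1 - r > 1 / (1 + (E1 - E0))" using assms(2) one_minus_eps by simp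
  then have "1 / (1 - r) < 1 + (E1 - E0)"
    using gap assms eps_less_1 by (simp add: divide_less_eq less_divide_eq mult.commute)
  moreover have "1 < 1 / (1 - r)" using assms eps_less_1 by (simp add: less_divide_eq)
  ultimately have "E0 - 1 + 1 / (1 - r) \<notin> op_spectrum D H" by (intro regular_in_gap) auto
  then have "bounded_below_on UNIV (\<lambda>y. T y - (1 - r) *\<^sub>R y)"
    using T_bounded_below assms eps_less_1 by simp
  moreover have "norm (S y - r *\<^sub>R y) = norm (T y - (1 - r) *\<^sub>R y)" for y
    using norm_minus_cancel[of "T y - (1 - r) *\<^sub>R y"] by (simp add: S_def algebra_simps)
  ultimately show ?thesis by (simp add: bounded_below_on_def)
qed

lemma gapped_positive_contraction_S: "gapped_positive_contraction S \<epsilon>"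
proof (rule gapped_positive_contraction.intro)
  show "bounded_linear S"
    unfolding S_def[abs_def] by (intro bounded_linear_sub bounded_linear_ident T_bounded_linear)
  show "inner (S x) y = inner x (S y)" for x y
    by (simp add: S_def inner_diff_left inner_diff_right T_symmetric)
  show "0 \<le> inner (S y) y" for y using T_form_le[of y] by (simp add: S_def inner_diff_left)
  show "inner (S y) y \<le> inner y y" for y using T_form_nonneg[of y] by (simp add: S_def inner_diff_left)
qed (use eps_pos eps_less_1 S_bounded_below in auto)

lemma kernel_S: "{v. S v = 0} = V"
proof -
  have "S v = 0 \<longleftrightarrow> T v = v" for v by (auto simp: S_def)
  also have "T v = v \<longleftrightarrow> v \<in> V" for v using resolvent_fixed_iff[OF regular_shift, of v] by simp
  finally show ?thesis by blast
qed

lemma orth_proj_eigenspace: "orth_proj V x \<in> V" "x - orth_proj V x \<in> V\<^sup>\<bottom>"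
  using gapped_positive_contraction.orth_proj_kernel[OF gapped_positive_contraction_S]
  by (simp_all add: kernel_S)

text \<open>On \<open>V\<^sup>\<bottom>\<close> we have \<open>0 \<le> T \<le> 1 - \<epsilon>\<close>, hence \<open>\<parallel>T y\<parallel>\<^sup>2 \<le> (1 - \<epsilon>) \<langle>T y, y\<rangle>\<close>; for
  \<open>y = (H - E0 + 1) z\<close> this reads \<open>(1 + E1 - E0) \<parallel>z\<parallel>\<^sup>2 \<le> \<langle>z, (H - E0 + 1) z\<rangle>\<close>.\<close>
lemma form_ge_on_eigenspace_orthogonal:
  assumes "z \<in> D" "z \<in> V\<^sup>\<bottom>"
  shows "E1 * inner z z \<le> inner z (H z)"
proof -
  interpret S: gapped_positive_contraction S \<epsilon> by (rule gapped_positive_contraction_S)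
  define y where "y = H z - (E0 - 1) *\<^sub>R z"
  have Ty: "T y = z" using assms(1) by (intro resolvent_unique[OF regular_shift]) (simp_all add: y_def)
  have "y \<in> V\<^sup>\<bottom>"
  proof -
    have "inner v y = 0" if "v \<in> V" for v
    proof -
      have "inner v (H z) = inner (H v) z"
        using symmetric[of v z] that assms(1) by (simp add: eigenspace_op_def)
      also have "\<dots> = E0 * inner v z" using that by (simp add: eigenspace_op_def)
      finally show ?thesis
        using assms(2) that by (simp add: y_def inner_diff_right orthogonal_comp_def orthogonal_def)
    qed
    then show ?thesis by (simp add: orthogonal_comp_def orthogonal_def)
  qed
  have T_eq: "T u = u - S u" for u by (simp add: S_def)
  have T_invariant: "T u \<in> V\<^sup>\<bottom>" if "u \<in> V\<^sup>\<bottom>" for u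
    using subspace_diff[OF subspace_orthogonal_comp that S.image_in_kernel_orthogonal[of u, unfolded kernel_S]]
    by (simp add: T_eq kernel_S)
  have T_upper: "inner (T u) u \<le> (1 - \<epsilon>) * inner u u" if "u \<in> V\<^sup>\<bottom>" for u
    using S.form_lower_bound_on_kernel_orthogonal[of u] that
    by (simp add: kernel_S T_eq inner_diff_left algebra_simps)
  have "inner (T y) (T y) \<le> (1 - \<epsilon>) * inner (T y) y"
    by (rule inner_image_le_of_form_bounds[OF bounded_linear.linear[OF T_bounded_linear] T_symmetric
          subspace_orthogonal_comp T_invariant T_form_nonneg T_upper])
      (use eps_less_1 \<open>y \<in> V\<^sup>\<bottom>\<close> in auto)
  then have "inner z z \<le> (1 - \<epsilon>) * inner z y" by (simp only: Ty)
  then have "(1 + (E1 - E0)) * inner z z \<le> inner z y"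
    using gap by (simp add: one_minus_eps field_simps)
  then show ?thesis by (simp add: y_def inner_diff_right algebra_simps)
qed

lemma energy_excess_ge:
  assumes "x \<in> D" "v \<in> V" "x - v \<in> V\<^sup>\<bottom>"
  shows "(E1 - E0) * inner (x - v) (x - v) \<le> inner x (H x) - E0 * inner x x"
proof -
  define w where "w = x - v"
  have "v \<in> D" "H v = E0 *\<^sub>R v" using assms(2) by (auto simp: eigenspace_op_def)
  have "w \<in> D" using assms(1) \<open>v \<in> D\<close> subspace_domain by (simp add: w_def subspace_diff)
  have vw: "inner v w = 0" using assms(2,3) by (simp add: w_def orthogonal_comp_def orthogonal_def)
  have "inner v (H w) = inner (H v) w" using symmetric[OF \<open>v \<in> D\<close> \<open>w \<in> D\<close>] by simp
  then have vHw: "inner v (H w) = 0" using vw \<open>H v = E0 *\<^sub>R v\<close> by simp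
  have x: "x = v + w" by (simp add: w_def)
  have "inner x (H x) = E0 * inner v v + inner w (H w)"
    unfolding x using H_add[OF \<open>v \<in> D\<close> \<open>w \<in> D\<close>] \<open>H v = E0 *\<^sub>R v\<close> vw vHw
    by (simp add: inner_add_left inner_add_right inner_commute)
  moreover have "inner x x = inner v v + inner w w"
    unfolding x using vw by (simp add: inner_add_left inner_add_right inner_commute)
  moreover have "E1 * inner w w \<le> inner w (H w)"
    using form_ge_on_eigenspace_orthogonal \<open>w \<in> D\<close> assms(3) by (simp add: w_def)
  ultimately show ?thesis by (simp add: w_def[symmetric] algebra_simps)
qed

end

section \<open>The normalized gradient flow\<close>

lemma has_real_derivative_at_of_within_atLeast:
  assumes "(f has_real_derivative D) (at x within {a..})" "a < x"
  shows "(f has_real_derivative D) (at x)"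
proof -
  have "(f has_real_derivative D) (at x within {a<..})" by (rule DERIV_subset[OF assms(1)]) auto
  then show ?thesis using at_within_open[of x "{a<..}"] assms(2) by simp
qed

locale normalized_gradient_flow = spectral_gap D H E0 E1
  for D :: "'a::{real_inner, complete_space} set" and H E0 E1 +
  fixes \<psi> :: "real \<Rightarrow> 'a"
  assumes sphere: "\<And>t. 0 \<le> t \<Longrightarrow> norm (\<psi> t) = 1 \<and> \<psi> t \<in> D"
    and flow: "\<And>t. 0 \<le> t \<Longrightarrow> (\<psi> has_vector_derivative
      (-2) *\<^sub>R (H (\<psi> t) - energy H (\<psi> t) *\<^sub>R \<psi> t)) (at t within {0..})"
    and not_perp: "\<psi> 0 \<notin> V\<^sup>\<bottom>"
begin

definition P0 :: 'a where "P0 = orth_proj V (\<psi> 0)"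

definition v0 :: 'a where "v0 = (1 / norm P0) *\<^sub>R P0"

definition \<alpha> :: real where "\<alpha> = norm (\<psi> 0 - P0) / norm P0"

definition overlap :: "real \<Rightarrow> real" where "overlap t = inner (\<psi> t) v0"

lemma P0_in_eigenspace: "P0 \<in> V" and P0_orthogonal: "\<psi> 0 - P0 \<in> V\<^sup>\<bottom>"
  unfolding P0_def by (rule orth_proj_eigenspace)+

lemma P0_nonzero: "P0 \<noteq> 0"
  using P0_orthogonal not_perp by auto

lemma v0_in_eigenspace: "v0 \<in> V"
  using P0_in_eigenspace subspace_eigenspace by (simp add: v0_def subspace_scale)

lemma inner_v0_v0: "inner v0 v0 = 1"
  using P0_nonzero by (simp add: v0_def power2_norm_eq_inner[symmetric])

lemma inner_psi0_eigenspace: "v \<in> V \<Longrightarrow> inner (\<psi> 0) v = inner P0 v"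
  using P0_orthogonal by (simp add: orthogonal_comp_def orthogonal_def inner_diff_right inner_commute)

lemma overlap_0: "overlap 0 = norm P0"
  using inner_psi0_eigenspace[OF v0_in_eigenspace] P0_nonzero
  by (simp add: overlap_def v0_def power2_norm_eq_inner[symmetric] power2_eq_square)

lemma inner_psi_psi: "0 \<le> t \<Longrightarrow> inner (\<psi> t) (\<psi> t) = 1"
  using sphere by (simp add: power2_norm_eq_inner[symmetric])

lemma alpha_sq: "\<alpha>\<^sup>2 = 1 / (overlap 0)\<^sup>2 - 1"
proof -
  have "inner P0 (\<psi> 0 - P0) = 0"
    using P0_in_eigenspace P0_orthogonal by (simp add: orthogonal_comp_def orthogonal_def)
  then have "inner (\<psi> 0) (\<psi> 0) = inner P0 P0 + inner (\<psi> 0 - P0) (\<psi> 0 - P0)"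
    by (simp add: inner_diff_left inner_diff_right inner_commute)
  then have "(norm (\<psi> 0 - P0))\<^sup>2 = 1 - (norm P0)\<^sup>2"
    using inner_psi_psi[of 0] by (simp add: power2_norm_eq_inner)
  then show ?thesis using P0_nonzero by (simp add: \<alpha>_def overlap_0 power_divide field_simps)
qed

lemma energy_eq: "0 \<le> t \<Longrightarrow> energy H (\<psi> t) = inner (\<psi> t) (H (\<psi> t))"
  using inner_psi_psi by (simp add: energy_def)

lemma energy_ge:
  assumes "0 \<le> t"
  shows "E0 \<le> energy H (\<psi> t)"
proof -
  let ?w = "\<psi> t - orth_proj V (\<psi> t)"
  have "(E1 - E0) * inner ?w ?w \<le> inner (\<psi> t) (H (\<psi> t)) - E0 * inner (\<psi> t) (\<psi> t)"
    using energy_excess_ge[of "\<psi> t" "orth_proj V (\<psi> t)"] orth_proj_eigenspace sphere[OF assms]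
    by simp
  moreover have "0 \<le> (E1 - E0) * inner ?w ?w" using gap by simp
  ultimately show ?thesis using energy_eq[OF assms] inner_psi_psi[OF assms] by simp
qed

lemma eigenspace_component_has_derivative:
  assumes "0 \<le> t" "v \<in> V"
  shows "((\<lambda>s. inner (\<psi> s) v) has_real_derivative
    2 * (energy H (\<psi> t) - E0) * inner (\<psi> t) v) (at t within {0..})"
proof -
  have "inner (H (\<psi> t)) v = inner (\<psi> t) (H v)"
    using symmetric[of "\<psi> t" v] sphere assms by (simp add: eigenspace_op_def)
  also have "\<dots> = E0 * inner (\<psi> t) v" using assms(2) by (simp add: eigenspace_op_def)
  finally have "inner ((-2) *\<^sub>R (H (\<psi> t) - energy H (\<psi> t) *\<^sub>R \<psi> t)) v
      = 2 * (energy H (\<psi> t) - E0) * inner (\<psi> t) v"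
    by (simp add: inner_diff_left algebra_simps)
  moreover have "((\<lambda>s. inner (\<psi> s) v) has_vector_derivative
      inner ((-2) *\<^sub>R (H (\<psi> t) - energy H (\<psi> t) *\<^sub>R \<psi> t)) v) (at t within {0..})"
    using flow[OF assms(1)] by (rule bounded_linear.has_vector_derivative[OF bounded_linear_inner_left])
  ultimately show ?thesis by (simp add: has_real_derivative_iff_has_vector_derivative)
qed

lemma overlap_has_derivative:
  "0 \<le> t \<Longrightarrow> (overlap has_real_derivative 2 * (energy H (\<psi> t) - E0) * overlap t)
    (at t within {0..})"
  using eigenspace_component_has_derivative[OF _ v0_in_eigenspace]
  unfolding overlap_def[abs_def] by simp

lemma continuous_on_overlap: "continuous_on {0..} overlap"
  unfolding continuous_on_eq_continuous_within
  using overlap_has_derivative by (auto intro: DERIV_continuous)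

lemma overlap_sq_ge:
  assumes "0 \<le> t"
  shows "overlap 0 * overlap 0 \<le> overlap t * overlap t"
proof (rule DERIV_nonneg_imp_increasing_open[where f = "\<lambda>s. overlap s * overlap s", OF assms])
  fix s :: real assume "0 < s" "s < t"
  let ?d = "2 * (energy H (\<psi> s) - E0) * overlap s"
  have "(overlap has_real_derivative ?d) (at s)"
    by (rule has_real_derivative_at_of_within_atLeast[OF overlap_has_derivative])
      (use \<open>0 < s\<close> in auto)
  from DERIV_mult[OF this this]
  have "((\<lambda>s. overlap s * overlap s) has_real_derivative ?d * overlap s + ?d * overlap s) (at s)" .
  moreover have "0 \<le> ?d * overlap s + ?d * overlap s"
  proof -
    have sum_eq: "?d * overlap s + ?d * overlap s
        = 4 * ((energy H (\<psi> s) - E0) * (overlap s * overlap s))"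
      by (simp add: algebra_simps)
    show ?thesis unfolding sum_eq using energy_ge[of s] \<open>0 < s\<close> by simp
  qed
  ultimately show "\<exists>y. ((\<lambda>s. overlap s * overlap s) has_real_derivative y) (at s) \<and> 0 \<le> y"
    by blast
qed (use continuous_on_subset[OF continuous_on_overlap] in \<open>auto intro!: continuous_intros\<close>)

lemma overlap_pos: "0 \<le> t \<Longrightarrow> 0 < overlap t"
proof (rule ccontr)
  assume "0 \<le> t" "\<not> 0 < overlap t"
  moreover have "continuous_on {0..t} overlap"
    by (rule continuous_on_subset[OF continuous_on_overlap]) auto
  moreover have "0 < overlap 0" using overlap_0 P0_nonzero by simp
  ultimately obtain s where "0 \<le> s" "overlap s = 0"
    using IVT2'[of overlap t 0 0] by force
  then show False
    using overlap_sq_ge[of s] mult_pos_pos[OF \<open>0 < overlap 0\<close> \<open>0 < overlap 0\<close>] by simp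
qed

text \<open>All components in the eigenspace obey the same linear equation, so their ratios to
  the (positive) overlap stay constant.\<close>
lemma eigenspace_component_eq:
  assumes "0 \<le> t" "v \<in> V"
  shows "inner (\<psi> t) v = overlap t * inner v0 v"
proof -
  define h where "h s = inner (\<psi> s) v / overlap s" for s
  have "(h has_field_derivative 0) (at s within {0..t})" if "s \<in> {0..t}" for s
  proof -
    let ?c = "2 * (energy H (\<psi> s) - E0)"
    have "0 \<le> s" using that by simp
    have "((\<lambda>s. inner (\<psi> s) v) has_real_derivative ?c * inner (\<psi> s) v) (at s within {0..t})"
      by (rule DERIV_subset[OF eigenspace_component_has_derivative[OF \<open>0 \<le> s\<close> assms(2)]]) auto
    moreover have "(overlap has_real_derivative ?c * overlap s) (at s within {0..t})"
      by (rule DERIV_subset[OF overlap_has_derivative[OF \<open>0 \<le> s\<close>]]) auto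
    ultimately have "(h has_field_derivative
        (?c * inner (\<psi> s) v * overlap s - inner (\<psi> s) v * (?c * overlap s)) / (overlap s * overlap s))
        (at s within {0..t})"
      unfolding h_def using overlap_pos[of s] that by (intro DERIV_divide) auto
    then show ?thesis by (simp add: algebra_simps)
  qed
  then obtain c where "\<forall>s\<in>{0..t}. h s = c"
    using has_field_derivative_zero_constant[of "{0..t}" h] by auto
  then have "h t = h 0" using assms(1) by simp
  also have "h 0 = inner v0 v"
    using inner_psi0_eigenspace[OF assms(2)] P0_nonzero by (simp add: h_def overlap_0 v0_def)
  finally show ?thesis using overlap_pos[OF assms(1)] by (simp add: h_def field_simps)
qed

lemma energy_excess_overlap:
  assumes "0 \<le> t"
  shows "(E1 - E0) * (1 - (overlap t)\<^sup>2) \<le> energy H (\<psi> t) - E0"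
proof -
  let ?v = "overlap t *\<^sub>R v0"
  have "?v \<in> V" using v0_in_eigenspace subspace_eigenspace by (simp add: subspace_scale)
  moreover have "\<psi> t - ?v \<in> V\<^sup>\<bottom>"
    using eigenspace_component_eq[OF assms]
    by (simp add: orthogonal_comp_def orthogonal_def inner_diff_right inner_commute)
  moreover have "inner (\<psi> t - ?v) (\<psi> t - ?v) = 1 - (overlap t)\<^sup>2"
    using inner_psi_psi[OF assms] inner_v0_v0
    by (simp add: inner_diff_left inner_diff_right inner_commute overlap_def power2_eq_square)
  ultimately show ?thesis
    using energy_excess_ge[of "\<psi> t" ?v] sphere[OF assms] inner_psi_psi[OF assms]
    by (simp add: energy_eq[OF assms])
qed

text \<open>By the previous lemma, \<open>(1/p\<^sup>2 - 1) exp (4 (E1 - E0) t)\<close> has non-positive derivative,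
  where \<open>p\<close> is the overlap.\<close>
lemma overlap_decay:
  assumes "0 \<le> t"
  shows "(1 / (overlap t)\<^sup>2 - 1) * exp (4 * (E1 - E0) * t) \<le> \<alpha>\<^sup>2"
proof -
  define k where "k = 4 * (E1 - E0)"
  define G where "G s = (1 / (overlap s * overlap s) - 1) * exp (k * s)" for s
  have "G t \<le> G 0"
  proof (rule DERIV_nonpos_imp_decreasing_open[OF assms])
    fix x assume x: "0 < x" "x < t"
    define P where "P = overlap x"
    have "P > 0" using overlap_pos x by (simp add: P_def)
    have "(overlap has_real_derivative 2 * (energy H (\<psi> x) - E0) * P) (at x)"
      using overlap_has_derivative[of x] x has_real_derivative_at_of_within_atLeast
      by (simp add: P_def)
    then have "(G has_real_derivative
        exp (k * x) / (P * P) * (k * (1 - P * P) - 4 * (energy H (\<psi> x) - E0))) (at x)"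
      unfolding G_def[abs_def] using \<open>P > 0\<close>
      by (auto intro!: derivative_eq_intros simp: P_def[symmetric] field_simps)
    moreover have "k * (1 - P * P) - 4 * (energy H (\<psi> x) - E0) \<le> 0"
    proof -
      have "(E1 - E0) * (1 - P * P) \<le> energy H (\<psi> x) - E0"
        using energy_excess_overlap[of x] x by (simp add: P_def power2_eq_square)
      then have "4 * ((E1 - E0) * (1 - P * P)) \<le> 4 * (energy H (\<psi> x) - E0)"
        by (rule mult_left_mono) simp
      then show ?thesis unfolding k_def mult.assoc by (simp only: diff_le_0_iff_le)
    qed
    ultimately show "\<exists>y. (G has_real_derivative y) (at x) \<and> y \<le> 0"
      using \<open>P > 0\<close> by (metis divide_pos_pos exp_gt_zero mult_pos_pos mult_nonneg_nonpos less_imp_le)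
  next
    have "continuous_on {0..t} overlap" by (rule continuous_on_subset[OF continuous_on_overlap]) auto
    moreover have "overlap s * overlap s \<noteq> 0" if "s \<in> {0..t}" for s
      using overlap_pos[of s] that by simp
    ultimately show "continuous_on {0..t} G"
      unfolding G_def[abs_def] by (intro continuous_intros) auto
  qed
  then show ?thesis using alpha_sq by (simp add: G_def k_def power2_eq_square)
qed

lemma distance_bound:
  assumes "0 \<le> t"
  shows "norm (v0 - \<psi> t) \<le> sqrt 2 * \<alpha> * exp (-2 * (E1 - E0) * t)"
proof -
  define P where "P = overlap t"
  define e where "e = exp (-2 * (E1 - E0) * t)"
  have P: "0 < P" "P \<le> 1"
    using overlap_pos[OF assms] norm_cauchy_schwarz[of "\<psi> t" v0] sphere[OF assms] inner_v0_v0
    by (auto simp: P_def overlap_def norm_eq_sqrt_inner)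
  have "e\<^sup>2 = exp (- (4 * (E1 - E0) * t))"
    unfolding e_def exp_double[symmetric] by (simp add: algebra_simps)
  then have "exp (4 * (E1 - E0) * t) * e\<^sup>2 = 1" by (simp add: exp_minus)
  then have "1 / P\<^sup>2 - 1 = (1 / P\<^sup>2 - 1) * exp (4 * (E1 - E0) * t) * e\<^sup>2"
    by (simp add: mult.assoc)
  also have "\<dots> \<le> \<alpha>\<^sup>2 * e\<^sup>2"
    using overlap_decay[OF assms] by (intro mult_right_mono) (simp_all add: P_def)
  finally have "1 - P\<^sup>2 \<le> P\<^sup>2 * (\<alpha>\<^sup>2 * e\<^sup>2)" using P by (simp add: field_simps)
  also have "\<dots> \<le> \<alpha>\<^sup>2 * e\<^sup>2" using P by (intro mult_left_le_one_le) (auto simp: power_le_one)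
  finally have "2 - 2 * P \<le> 2 * (\<alpha>\<^sup>2 * e\<^sup>2)" using P by (smt (verit) mult_left_le power2_eq_square)
  moreover have "(norm (v0 - \<psi> t))\<^sup>2 = 2 - 2 * P"
    using inner_v0_v0 inner_psi_psi[OF assms]
    by (simp add: power2_norm_eq_inner inner_diff_left inner_diff_right inner_commute P_def overlap_def)
  ultimately have "(norm (v0 - \<psi> t))\<^sup>2 \<le> (sqrt 2 * \<alpha> * e)\<^sup>2" by (simp add: power_mult_distrib)
  moreover have "0 \<le> sqrt 2 * \<alpha> * e" by (simp add: e_def \<alpha>_def)
  ultimately show ?thesis unfolding e_def[symmetric] by (rule power2_le_imp_le)
qed

end

lemma not_mem_between_Inf:
  fixes A :: "real set"
  assumes "bdd_below A" "Inf A < l" "l < Inf (A - {Inf A})"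
  shows "l \<notin> A"
proof
  assume "l \<in> A"
  moreover have "bdd_below (A - {Inf A})" using assms(1) by (rule bdd_below_mono) auto
  ultimately have "Inf (A - {Inf A}) \<le> l" using assms(2) by (intro cInf_lower) auto
  with assms(3) show False by simp
qed

theorem mainTheorem2:
  fixes D :: "'a::{real_inner, complete_space} set"
    and H :: "'a \<Rightarrow> 'a"
    and E0 E1 :: real
    and \<psi>0 :: 'a
    and \<psi> :: "real \<Rightarrow> 'a"
  assumes sa: "densely_defined_self_adjoint D H"
    and bdd: "bdd_below (op_spectrum D H)"
    and E0_def: "E0 = Inf (op_spectrum D H)"
    and E0_eig: "\<exists>x\<in>D. x \<noteq> 0 \<and> H x = E0 *\<^sub>R x"
    and E1_def: "E1 = Inf (op_spectrum D H - {E0})"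
    and gap: "E1 > E0"
    and \<psi>0_unit: "norm \<psi>0 = 1"
    and \<psi>0_not_perp: "\<psi>0 \<notin> orthogonal_comp (eigenspace_op D H E0)"
    and \<psi>_sphere: "\<forall>t\<ge>0. norm (\<psi> t) = 1 \<and> \<psi> t \<in> D"
    and \<psi>_flow: "\<forall>t\<ge>0. (\<psi> has_vector_derivative
                   (-2) *\<^sub>R (H (\<psi> t) - energy H (\<psi> t) *\<^sub>R \<psi> t)) (at t within {0..})"
    and \<psi>_init: "\<psi> 0 = \<psi>0"
  shows "\<forall>t\<ge>0.
    (let P0 = orth_proj (eigenspace_op D H E0);
         v0 = (1 / norm (P0 \<psi>0)) *\<^sub>R P0 \<psi>0;
         \<alpha> = norm (\<psi>0 - P0 \<psi>0) / norm (P0 \<psi>0)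
     in norm (v0 - \<psi> t) \<le> sqrt 2 * \<alpha> * exp (-2 * (E1 - E0) * t))"
proof -
  have regular_below: "l \<notin> op_spectrum D H" if "l < E0" for l
    using that bdd E0_def cInf_lower by fastforce
  have regular_in_gap: "l \<notin> op_spectrum D H" if "E0 < l" "l < E1" for l
    using not_mem_between_Inf[OF bdd] that E0_def E1_def by simp
  interpret normalized_gradient_flow D H E0 E1 \<psi>
    using sa regular_below regular_in_gap gap \<psi>_sphere \<psi>_flow \<psi>0_not_perp \<psi>_init
    by unfold_locales (auto simp: densely_defined_self_adjoint_def)
  show ?thesis
    using distance_bound by (simp add: Let_def P0_def v0_def \<alpha>_def \<psi>_init)
qed

end
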